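(* If $p,q\in\mathbf P(S)$ for a DRC-semigroup $S$, then the following are equivalent: (i) $pq=qp$; (ii) $p\theta_q=q\theta_p$ and $p\delta_q=q\delta_p$; (iii) $p\theta_q=q\theta_p=p\delta_q=q\delta_p$; (iv) $p\theta_q=q\theta_p=p\delta_q=q\delta_p=pq=qp$.
   Context: A DRC-semigroup is $(S,\cdot,D,R)$, $(S,\cdot)$ a semigroup, $D,R:S\to S$ with, for all $a,b$: $D(a)a=a$, $aR(a)=a$; $D(ab)=D(aD(b))$, $R(ab)=R(R(a)b)$; $D(ab)=D(a)D(ab)D(a)$, $R(ab)=R(b)R(ab)R(b)$; $R(D(a))=D(a)$, $D(R(a))=R(a)$. $\mathbf P(S)=\{D(a):a\in S\}$, and for $p,q\in\mathbf P(S)$: $q\theta_p=R(qp)$, $q\delta_p=D(pq)$. *)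

theory Defs
  imports Main
begin

definition drc_semigroup :: "('a \<Rightarrow> 'a \<Rightarrow> 'a) \<Rightarrow> ('a \<Rightarrow> 'a) \<Rightarrow> ('a \<Rightarrow> 'a) \<Rightarrow> bool" where
  "drc_semigroup m D R \<longleftrightarrow>
     (\<forall>a b c. m (m a b) c = m a (m b c)) \<and>
     (\<forall>a. m (D a) a = a) \<and> (\<forall>a. m a (R a) = a) \<and>
     (\<forall>a b. D (m a b) = D (m a (D b))) \<and> (\<forall>a b. R (m a b) = R (m (R a) b)) \<and>
     (\<forall>a b. D (m a b) = m (m (D a) (D (m a b))) (D a)) \<and>
     (\<forall>a b. R (m a b) = m (m (R b) (R (m a b))) (R b)) \<and>
     (\<forall>a. R (D a) = D a) \<and> (\<forall>a. D (R a) = R a)"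

definition projections :: "('a \<Rightarrow> 'a) \<Rightarrow> 'a set" where
  "projections D = {D a | a. True}"

definition theta :: "('a \<Rightarrow> 'a \<Rightarrow> 'a) \<Rightarrow> ('a \<Rightarrow> 'a) \<Rightarrow> 'a \<Rightarrow> 'a \<Rightarrow> 'a" where
  "theta m R q p = R (m q p)"

definition delta :: "('a \<Rightarrow> 'a \<Rightarrow> 'a) \<Rightarrow> ('a \<Rightarrow> 'a) \<Rightarrow> 'a \<Rightarrow> 'a \<Rightarrow> 'a" where
  "delta m D q p = D (m p q)"

end

theory Submission
  imports Defs
begin

text \<open>For a projection \<open>p\<close>, the sandwich axiom gives \<open>D (p b) = p D (p b) p\<close>, so \<open>D (p b)\<close>
  absorbs \<open>p\<close>; dually \<open>R (a q)\<close> absorbs a projection \<open>q\<close>. If \<open>D (pq) = D (qp) = e\<close>, then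
  \<open>pq = e p q = e q = e\<close> and likewise \<open>qp = e\<close>; the same argument with \<open>R\<close> shows \<open>pq = R (pq)\<close>.
  Hence (ii) forces all six elements of (iv) to coincide, and the remaining implications are
  immediate.\<close>

locale drc =
  fixes mult :: "'a \<Rightarrow> 'a \<Rightarrow> 'a" (infixl \<open>\<cdot>\<close> 70) and D R :: "'a \<Rightarrow> 'a"
  assumes drc_semigroup: "drc_semigroup (\<cdot>) D R"
begin

lemma assoc: "a \<cdot> b \<cdot> c = a \<cdot> (b \<cdot> c)"
  using drc_semigroup unfolding drc_semigroup_def by blast

lemma D_mult_left: "D a \<cdot> a = a"
  using drc_semigroup unfolding drc_semigroup_def by blast

lemma R_mult_right: "a \<cdot> R a = a"
  using drc_semigroup unfolding drc_semigroup_def by blast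

lemma D_mult_sandwich: "D (a \<cdot> b) = D a \<cdot> D (a \<cdot> b) \<cdot> D a"
  using drc_semigroup unfolding drc_semigroup_def by blast

lemma R_mult_sandwich: "R (a \<cdot> b) = R b \<cdot> R (a \<cdot> b) \<cdot> R b"
  using drc_semigroup unfolding drc_semigroup_def by blast

lemma R_D: "R (D a) = D a"
  using drc_semigroup unfolding drc_semigroup_def by blast

lemma D_R: "D (R a) = R a"
  using drc_semigroup unfolding drc_semigroup_def by blast

lemma
  assumes "p \<in> projections D"
  shows D_projection: "D p = p" and R_projection: "R p = p" and projection_idem: "p \<cdot> p = p"
proof -
  from assms obtain a where p: "p = D a"
    unfolding projections_def by blast
  show "D p = p" unfolding p by (metis R_D D_R)
  show "R p = p" unfolding p by (rule R_D)
  show "p \<cdot> p = p" using D_mult_left[of p] \<open>D p = p\<close> by simp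
qed

lemma sandwich_idem_absorb:
  assumes "p \<cdot> p = p" and e: "e = p \<cdot> e \<cdot> p"
  shows "p \<cdot> e = e" and "e \<cdot> p = e"
proof -
  have "p \<cdot> e = p \<cdot> p \<cdot> e \<cdot> p" using e by (simp add: assoc)
  also have "\<dots> = e" using assms by simp
  finally show "p \<cdot> e = e" .
  have "e \<cdot> p = p \<cdot> e \<cdot> (p \<cdot> p)" using e by (metis assoc)
  also have "\<dots> = e" using assms by simp
  finally show "e \<cdot> p = e" .
qed

lemma D_mult_projection_absorb:
  assumes "p \<in> projections D"
  shows "D (p \<cdot> b) \<cdot> p = D (p \<cdot> b)"
  using sandwich_idem_absorb(2)[OF projection_idem[OF assms]] D_mult_sandwich[of p b]
  by (simp add: D_projection[OF assms])

lemma R_mult_projection_absorb: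
  assumes "q \<in> projections D"
  shows "q \<cdot> R (a \<cdot> q) = R (a \<cdot> q)"
  using sandwich_idem_absorb(1)[OF projection_idem[OF assms]] R_mult_sandwich[of a q]
  by (simp add: R_projection[OF assms])

lemma mult_projections_eq_D:
  assumes p: "p \<in> projections D" and q: "q \<in> projections D"
    and "D (p \<cdot> q) = D (q \<cdot> p)"
  shows "p \<cdot> q = D (p \<cdot> q)"
proof -
  have "p \<cdot> q = D (p \<cdot> q) \<cdot> p \<cdot> q" by (simp add: D_mult_left assoc)
  also have "\<dots> = D (q \<cdot> p) \<cdot> q" using D_mult_projection_absorb[OF p] assms(3) by metis
  also have "\<dots> = D (p \<cdot> q)" using D_mult_projection_absorb[OF q] assms(3) by metis
  finally show ?thesis .
qed

lemma mult_projections_eq_R: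
  assumes p: "p \<in> projections D" and q: "q \<in> projections D"
    and "R (p \<cdot> q) = R (q \<cdot> p)"
  shows "p \<cdot> q = R (p \<cdot> q)"
proof -
  have "p \<cdot> q = p \<cdot> (q \<cdot> R (p \<cdot> q))" by (simp add: R_mult_right flip: assoc)
  also have "\<dots> = p \<cdot> R (q \<cdot> p)" using R_mult_projection_absorb[OF q] assms(3) by metis
  also have "\<dots> = R (p \<cdot> q)" using R_mult_projection_absorb[OF p] assms(3) by metis
  finally show ?thesis .
qed

lemma projections_commute_if_D_R_symmetric:
  assumes p: "p \<in> projections D" and q: "q \<in> projections D"
    and R_eq: "R (p \<cdot> q) = R (q \<cdot> p)" and D_eq: "D (p \<cdot> q) = D (q \<cdot> p)"
  shows "p \<cdot> q = q \<cdot> p" and "p \<cdot> q = D (p \<cdot> q)" and "p \<cdot> q = R (p \<cdot> q)"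
proof -
  show pq: "p \<cdot> q = D (p \<cdot> q)" using mult_projections_eq_D[OF p q D_eq] .
  have "q \<cdot> p = D (q \<cdot> p)" using mult_projections_eq_D[OF q p D_eq[symmetric]] .
  then show "p \<cdot> q = q \<cdot> p" using pq D_eq by simp
  show "p \<cdot> q = R (p \<cdot> q)" using mult_projections_eq_R[OF p q R_eq] .
qed

end

theorem proposition10p1:
  fixes m :: "'a \<Rightarrow> 'a \<Rightarrow> 'a" and D R :: "'a \<Rightarrow> 'a" and p q :: 'a
  assumes "drc_semigroup m D R"
    and "p \<in> projections D" and "q \<in> projections D"
  defines "i \<equiv> m p q = m q p"
    and "ii \<equiv> theta m R p q = theta m R q p \<and> delta m D p q = delta m D q p"
    and "iii \<equiv> theta m R p q = theta m R q p \<and> theta m R q p = delta m D p q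
               \<and> delta m D p q = delta m D q p"
    and "iv \<equiv> theta m R p q = theta m R q p \<and> theta m R q p = delta m D p q
               \<and> delta m D p q = delta m D q p \<and> delta m D q p = m p q \<and> m p q = m q p"
  shows "(i \<longleftrightarrow> ii) \<and> (ii \<longleftrightarrow> iii) \<and> (iii \<longleftrightarrow> iv)"
proof -
  interpret drc m D R by (rule drc.intro) fact
  have iv_if_D_R_symmetric: "iv" if "R (m p q) = R (m q p)" and "D (m p q) = D (m q p)"
    using projections_commute_if_D_R_symmetric[OF assms(2,3) that] that
    unfolding iv_def theta_def delta_def by metis
  have "i \<Longrightarrow> iv" "ii \<Longrightarrow> iv"
    using iv_if_D_R_symmetric unfolding i_def ii_def theta_def delta_def by auto
  moreover have "iv \<Longrightarrow> i" "iv \<Longrightarrow> iii" "iii \<Longrightarrow> ii"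
    unfolding i_def ii_def iii_def iv_def by auto
  ultimately show ?thesis by blast
qed

end
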